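(* Let $f,g\in \mathbb{Z}[\alpha_1^{\pm 1},\ldots,\alpha_r^{\pm 1}]$. Then: (1) There exists a set $K\subset \mathbb{Z}^r$ contained in a finite union of hyperplanes of $\mathbb{R}^r$ such that if $\mathcal N(f)\subset \mathcal N(g)$ then $\mathcal N(f(\xi^s))\subset \mathcal N(g(\xi^s))$ for all $s\in \mathbb{Z}^r\setminus K$. (2) If $K\subset \mathbb{Z}^r$ is contained in a finite union of hyperplanes and $\mathcal N(f(\xi^s))\subset \mathcal N(g(\xi^s))$ for all $s\in \mathbb{Z}^r\setminus K$, then $\mathcal N(f)\subset \mathcal N(g)$. (3) If $K\subset \mathbb{Z}^r$ is contained in a finite union of hyperplanes and $\mathcal N(f)\subsetneq \mathcal N(g)$, then there is an $s\in \mathbb{Z}^r\setminus K$ with $\mathcal N(f(\xi^s))\subsetneq \mathcal N(g(\xi^s))$.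
   Context: For $f\in \mathbb{Z}[\alpha_1^{\pm 1},\ldots,\alpha_r^{\pm 1}]$ the Newton polytope $\mathcal N(f)\subset\mathbb{R}^r$ is the convex hull of the set of exponent vectors $(u_1,\ldots,u_r)\in\mathbb{Z}^r$ such that the coefficient of $\alpha_1^{u_1}\cdots\alpha_r^{u_r}$ in $f$ is nonzero (for a Laurent polynomial in one variable $\xi$ it is a segment in $\mathbb{R}$). For $s=(s_1,\ldots,s_r)\in\mathbb{Z}^r$, the toric substitution $f\mapsto f(\xi^s)$ is the ring homomorphism $\mathbb{Z}[\alpha_1^{\pm1},\ldots,\alpha_r^{\pm1}]\to\mathbb{Z}[\xi^{\pm1}]$, $\alpha_i\mapsto \xi^{s_i}$. *)

theory Defs
  imports "HOL-Analysis.Analysis"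
begin

text \<open>A Laurent polynomial in r variables with integer coefficients is represented by its
coefficient function on exponent vectors in Z^r (here int^'n, r = CARD('n)),
required to have finite support.\<close>

definition laurent_poly :: "(int^'n \<Rightarrow> int) \<Rightarrow> bool" where
  "laurent_poly f \<longleftrightarrow> finite {u. f u \<noteq> 0}"

definition real_vec :: "int^'n \<Rightarrow> real^'n" where
  "real_vec u = (\<chi> i. real_of_int (u $ i))"

definition newton :: "(int^'n \<Rightarrow> int) \<Rightarrow> (real^'n) set" where
  "newton f = convex hull (real_vec ` {u. f u \<noteq> 0})"

text \<open>Toric substitution alpha_i := xi^(s_i): coefficient function of the univariate
Laurent polynomial f(xi^s).\<close>
definition toric_subst :: "(int^'n \<Rightarrow> int) \<Rightarrow> int^'n \<Rightarrow> (int \<Rightarrow> int)" where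
  "toric_subst f s = (\<lambda>k. \<Sum>u \<in> {u. f u \<noteq> 0 \<and> (\<Sum>i\<in>UNIV. s $ i * u $ i) = k}. f u)"

definition newton1 :: "(int \<Rightarrow> int) \<Rightarrow> real set" where
  "newton1 p = convex hull (real_of_int ` {k. p k \<noteq> 0})"

definition in_finite_hyperplanes :: "(int^'n) set \<Rightarrow> bool" where
  "in_finite_hyperplanes K \<longleftrightarrow>
     (\<exists>H :: ((real^'n) \<times> real) set. finite H \<and> (\<forall>(a,b)\<in>H. a \<noteq> 0) \<and>
        real_vec ` K \<subseteq> (\<Union>(a,b)\<in>H. {x. a \<bullet> x = b}))"

end

theory Submission
  imports Defs
begin

text \<open>For s off the hyperplanes on which two exponents of g collide, the support of g(xi^s)
is the image of the support of g under u \<mapsto> s \<bullet> u, so the Newton segment of g(xi^s) is the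
image of the Newton polytope of g under this linear form; the segment of f(xi^s) always lies in
the image of the polytope of f, which gives (1). For (2) and (3), an exponent of f lying outside
the polytope of g is strictly separated from it by every direction in a nonempty open cone; such
a cone contains integer points off any finite union of hyperplanes, and for such an s the value
of the exponent lies in the segment of f(xi^s) but beyond the segment of g(xi^s).\<close>

definition int_dot :: "int^'n \<Rightarrow> int^'n \<Rightarrow> int" where
  "int_dot s u = (\<Sum>i\<in>UNIV. s $ i * u $ i)"

definition diff_vectors :: "(int^'n) set \<Rightarrow> (real^'n) set" where
  "diff_vectors A = {real_vec u - real_vec w | u w. u \<in> A \<and> w \<in> A \<and> u \<noteq> w}"

lemma real_of_int_int_dot: "real_of_int (int_dot s u) = real_vec s \<bullet> real_vec u"
  by (simp add: int_dot_def real_vec_def inner_vec_def)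

lemma real_vec_eq_iff: "real_vec u = real_vec w \<longleftrightarrow> u = w"
  by (simp add: real_vec_def vec_eq_iff)

lemma real_vec_of_nat_scale: "real_vec (of_nat m *s z) = real m *\<^sub>R real_vec z"
  by (simp add: real_vec_def vec_eq_iff)

lemma finite_diff_vectors: "finite A \<Longrightarrow> finite (diff_vectors A)"
proof -
  assume "finite A"
  have "diff_vectors A \<subseteq> (\<lambda>(u, w). real_vec u - real_vec w) ` (A \<times> A)"
    unfolding diff_vectors_def by auto
  then show ?thesis using \<open>finite A\<close> finite_subset by blast
qed

lemma zero_notin_diff_vectors: "0 \<notin> diff_vectors A"
  by (auto simp: diff_vectors_def real_vec_eq_iff)

lemma inj_on_int_dot_iff:
  "inj_on (int_dot s) A \<longleftrightarrow> (\<forall>c\<in>diff_vectors A. c \<bullet> real_vec s \<noteq> 0)"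
proof -
  have "int_dot s u = int_dot s w \<longleftrightarrow> (real_vec u - real_vec w) \<bullet> real_vec s = 0" for u w
  proof -
    have "int_dot s u = int_dot s w \<longleftrightarrow> real_of_int (int_dot s u) = real_of_int (int_dot s w)"
      by (rule of_int_eq_iff[symmetric])
    then show ?thesis by (simp add: real_of_int_int_dot inner_commute inner_diff_right)
  qed
  then show ?thesis unfolding inj_on_def diff_vectors_def by blast
qed

lemma toric_subst_int_dot: "toric_subst f s k = sum f {u. f u \<noteq> 0 \<and> int_dot s u = k}"
  by (simp add: toric_subst_def int_dot_def)

lemma support_toric_subst_subset: "{k. toric_subst f s k \<noteq> 0} \<subseteq> int_dot s ` {u. f u \<noteq> 0}"
  by (auto simp: toric_subst_int_dot intro: sum.neutral)

lemma support_toric_subst_eq: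
  assumes "inj_on (int_dot s) {u. f u \<noteq> 0}"
  shows "{k. toric_subst f s k \<noteq> 0} = int_dot s ` {u. f u \<noteq> 0}"
proof (intro equalityI support_toric_subst_subset subsetI)
  fix k assume "k \<in> int_dot s ` {u. f u \<noteq> 0}"
  then obtain u where u: "f u \<noteq> 0" "k = int_dot s u" by auto
  then have "{w. f w \<noteq> 0 \<and> int_dot s w = k} = {u}"
    using assms by (auto simp: inj_on_def)
  then show "k \<in> {k. toric_subst f s k \<noteq> 0}" using u by (simp add: toric_subst_int_dot)
qed

lemma convex_hull_int_dot_image:
  fixes s :: "int^'n"
  shows "convex hull (real_of_int ` int_dot s ` A) = (\<lambda>x. real_vec s \<bullet> x) ` (convex hull (real_vec ` A))"
proof -
  have "linear (\<lambda>x::real^'n. real_vec s \<bullet> x)"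
    by (simp add: bounded_linear.linear bounded_linear_inner_right)
  then show ?thesis
    by (simp add: convex_hull_linear_image image_image real_of_int_int_dot)
qed

lemma newton1_toric_subst_subset:
  "newton1 (toric_subst f s) \<subseteq> (\<lambda>x. real_vec s \<bullet> x) ` newton f"
  unfolding newton1_def newton_def convex_hull_int_dot_image[symmetric]
  by (intro hull_mono image_mono support_toric_subst_subset)

lemma newton1_toric_subst_eq:
  assumes "inj_on (int_dot s) {u. f u \<noteq> 0}"
  shows "newton1 (toric_subst f s) = (\<lambda>x. real_vec s \<bullet> x) ` newton f"
  unfolding newton1_def newton_def support_toric_subst_eq[OF assms] convex_hull_int_dot_image ..

lemma newton1_toric_subst_mono:
  assumes "inj_on (int_dot s) {u. g u \<noteq> 0}" and "newton f \<subseteq> newton g"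
  shows "newton1 (toric_subst f s) \<subseteq> newton1 (toric_subst g s)"
  using newton1_toric_subst_subset[of f s] newton1_toric_subst_eq[OF assms(1)] assms(2) by blast

lemma newton_subset_iff:
  "newton f \<subseteq> newton g \<longleftrightarrow> real_vec ` {u. f u \<noteq> 0} \<subseteq> newton g"
  unfolding newton_def by (meson convex_convex_hull hull_minimal hull_subset subset_trans)

lemma int_dot_in_newton1_diff:
  assumes "inj_on (int_dot s) {u. f u \<noteq> 0}" and "f u \<noteq> 0"
    and "\<And>w. g w \<noteq> 0 \<Longrightarrow> int_dot s w < int_dot s u"
  shows "real_of_int (int_dot s u) \<in> newton1 (toric_subst f s) - newton1 (toric_subst g s)"
proof
  show "real_of_int (int_dot s u) \<in> newton1 (toric_subst f s)"
    unfolding newton1_def support_toric_subst_eq[OF assms(1)] using assms(2) by (intro hull_inc) auto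
  have "newton1 (toric_subst g s) \<subseteq> convex hull (real_of_int ` int_dot s ` {w. g w \<noteq> 0})"
    unfolding newton1_def by (intro hull_mono image_mono support_toric_subst_subset)
  also have "\<dots> \<subseteq> {..< real_of_int (int_dot s u)}"
    using assms(3) by (intro hull_minimal) (auto simp: convex_real_interval)
  finally show "real_of_int (int_dot s u) \<notin> newton1 (toric_subst g s)" by auto
qed

lemma interior_Union_hyperplanes_empty:
  fixes C :: "'a::euclidean_space set"
  shows "finite C \<Longrightarrow> 0 \<notin> C \<Longrightarrow> interior (\<Union>c\<in>C. {x. c \<bullet> x = 0}) = {}"
proof (induction C rule: finite_induct)
  case (insert c C)
  have "closed (\<Union>c\<in>C. {x. c \<bullet> x = 0})"
    using insert by (intro closed_UN) (auto simp: closed_hyperplane)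
  then have "interior ((\<Union>c\<in>C. {x. c \<bullet> x = 0}) \<union> {x. c \<bullet> x = 0}) = interior (\<Union>c\<in>C. {x. c \<bullet> x = 0})"
    using insert by (intro interior_closed_Un_empty_interior) auto
  then show ?case using insert by (simp add: Un_commute)
qed simp

lemma exists_int_point_in_open_cone:
  fixes S :: "(real^'n) set"
  assumes "open S" and "S \<noteq> {}" and cone: "\<And>x t. x \<in> S \<Longrightarrow> t > 0 \<Longrightarrow> t *\<^sub>R x \<in> S"
  shows "\<exists>z. real_vec z \<in> S"
proof -
  obtain x e where x: "x \<in> S" and e: "e > 0" "ball x e \<subseteq> S"
    using assms(1,2) open_contains_ball by blast
  \<comment> \<open>the ball of radius t e around t x lies in S and contains the rounding of t x\<close>
  define t where "t = real CARD('n) / e"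
  have t: "t > 0" using e(1) by (simp add: t_def)
  define z where "z = (\<chi> i. round (t * x $ i))"
  have "norm (real_vec z - t *\<^sub>R x) \<le> (\<Sum>i\<in>UNIV. \<bar>(real_vec z - t *\<^sub>R x) $ i\<bar>)"
    by (rule norm_le_l1_cart)
  also have "\<dots> \<le> (\<Sum>i\<in>(UNIV::'n set). 1/2)"
    using of_int_round_abs_le by (intro sum_mono) (simp add: z_def real_vec_def)
  also have "\<dots> < t * e"
    using e(1) by (simp add: t_def)
  finally have "norm ((1/t) *\<^sub>R (real_vec z - t *\<^sub>R x)) < e"
    using t by (simp add: pos_divide_less_eq mult.commute)
  then have "dist ((1/t) *\<^sub>R real_vec z) x < e"
    using t by (simp add: dist_norm scaleR_diff_right)
  then have "(1/t) *\<^sub>R real_vec z \<in> S" using e(2) by (auto simp: dist_commute)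
  from cone[OF this t] show ?thesis using t by auto
qed

lemma exists_int_point_in_open_cone_off_hyperplanes:
  fixes S :: "(real^'n) set"
  assumes "open S" and "S \<noteq> {}" and cone: "\<And>x t. x \<in> S \<Longrightarrow> t > 0 \<Longrightarrow> t *\<^sub>R x \<in> S"
    and "finite C" and "0 \<notin> C"
  shows "\<exists>z. real_vec z \<in> S \<and> (\<forall>c\<in>C. c \<bullet> real_vec z \<noteq> 0)"
proof -
  define U where "U = (\<Union>c\<in>C. {x::real^'n. c \<bullet> x = 0})"
  have "closed U" unfolding U_def using \<open>finite C\<close> by (intro closed_UN) (auto simp: closed_hyperplane)
  then have "open (S - U)" using \<open>open S\<close> by (simp add: open_Diff)
  moreover have "S - U \<noteq> {}"
    using interior_Union_hyperplanes_empty[OF \<open>finite C\<close> \<open>0 \<notin> C\<close>] interior_maximal[of S U] assms(1,2)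
    unfolding U_def by blast
  moreover have "t *\<^sub>R x \<in> S - U" if "x \<in> S - U" "t > 0" for x t
  proof -
    have "c \<bullet> (t *\<^sub>R x) \<noteq> 0" if "c \<in> C" for c
      using \<open>x \<in> S - U\<close> \<open>t > 0\<close> that by (auto simp: U_def)
    then show ?thesis using that cone unfolding U_def by blast
  qed
  ultimately obtain z where "real_vec z \<in> S - U"
    using exists_int_point_in_open_cone by blast
  then show ?thesis unfolding U_def by blast
qed

lemma exists_multiple_off_affine_hyperplanes:
  fixes y :: "'a::real_inner"
  assumes "finite H" and "\<forall>(a, b)\<in>H. a \<bullet> y \<noteq> 0"
  shows "\<exists>m::nat. m > 0 \<and> (\<forall>(a, b)\<in>H. a \<bullet> (real m *\<^sub>R y) \<noteq> b)"
proof (rule ccontr)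
  assume none: "\<not> ?thesis"
  have "real ` {1..card H + 1} \<subseteq> (\<lambda>(a, b). b / (a \<bullet> y)) ` H"
  proof
    fix r assume "r \<in> real ` {1..card H + 1}"
    then obtain m where "m > 0" "r = real m" by auto
    then obtain p where "p \<in> H" "\<not> (case p of (a, b) \<Rightarrow> a \<bullet> (real m *\<^sub>R y) \<noteq> b)"
      using none by blast
    then obtain a b where ab: "(a, b) \<in> H" "real m * (a \<bullet> y) = b" by (cases p) auto
    then have "r = b / (a \<bullet> y)" using assms(2) \<open>r = real m\<close> by (auto simp: field_simps)
    then show "r \<in> (\<lambda>(a, b). b / (a \<bullet> y)) ` H" using ab(1) by force
  qed
  then have "card (real ` {1..card H + 1}) \<le> card ((\<lambda>(a, b). b / (a \<bullet> y)) ` H)"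
    using assms(1) by (intro card_mono) auto
  also have "\<dots> \<le> card H" using assms(1) by (rule card_image_le)
  finally have "card (real ` {1..card H + 1}) \<le> card H" .
  moreover have "card (real ` {1..card H + 1}) = card H + 1"
    by (subst card_image) (auto simp: inj_on_def)
  ultimately show False by simp
qed

lemma exists_int_direction_separating_off_hyperplanes:
  fixes v :: "real^'n"
  assumes "finite P" and "v \<notin> convex hull P" and "finite C" and "0 \<notin> C"
  shows "\<exists>z. (\<forall>y\<in>P. real_vec z \<bullet> y < real_vec z \<bullet> v) \<and> (\<forall>c\<in>C. c \<bullet> real_vec z \<noteq> 0)"
proof -
  define S where "S = {x::real^'n. \<forall>y\<in>P. x \<bullet> y < x \<bullet> v}"
  have "closed (convex hull P)"
    using assms(1) by (simp add: compact_imp_closed finite_imp_compact_convex_hull)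
  then obtain a b where "a \<bullet> v < b" "\<forall>x\<in>convex hull P. b < a \<bullet> x"
    using separating_hyperplane_closed_point[OF convex_convex_hull _ assms(2)] by blast
  then have "-a \<in> S"
    unfolding S_def using hull_subset[of P convex] by (simp add: subset_iff) (smt (verit))
  moreover have "open S"
  proof -
    have "S = (\<Inter>y\<in>P. {x. x \<bullet> y < x \<bullet> v})" unfolding S_def by auto
    moreover have "open {x::real^'n. x \<bullet> y < x \<bullet> v}" for y
      by (intro open_Collect_less continuous_on_inner continuous_on_id continuous_on_const)
    ultimately show ?thesis using assms(1) by (simp add: open_INT)
  qed
  moreover have "t *\<^sub>R x \<in> S" if "x \<in> S" "t > 0" for x t
    using that unfolding S_def by auto
  ultimately obtain z where "real_vec z \<in> S" "\<forall>c\<in>C. c \<bullet> real_vec z \<noteq> 0"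
    using exists_int_point_in_open_cone_off_hyperplanes[of S C] assms(3,4) by blast
  then show ?thesis unfolding S_def by blast
qed

lemma in_finite_hyperplanes_non_injective:
  assumes "finite A"
  shows "in_finite_hyperplanes {s. \<not> inj_on (int_dot s) A}"
  unfolding in_finite_hyperplanes_def
proof (intro exI conjI)
  let ?H = "(\<lambda>c. (c, 0::real)) ` diff_vectors A"
  show "finite ?H" using assms by (simp add: finite_diff_vectors)
  show "\<forall>(a, b)\<in>?H. a \<noteq> 0" using zero_notin_diff_vectors by auto
  show "real_vec ` {s. \<not> inj_on (int_dot s) A} \<subseteq> (\<Union>(a, b)\<in>?H. {x. a \<bullet> x = b})"
  proof
    fix x assume "x \<in> real_vec ` {s. \<not> inj_on (int_dot s) A}"
    then obtain s c where "x = real_vec s" "c \<in> diff_vectors A" "c \<bullet> real_vec s = 0"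
      by (auto simp: inj_on_int_dot_iff)
    then show "x \<in> (\<Union>(a, b)\<in>?H. {x. a \<bullet> x = b})" by auto
  qed
qed

lemma exists_generic_separating_exponent:
  fixes v :: "real^'n"
  assumes "finite P" and "v \<notin> convex hull P" and "finite A" and "in_finite_hyperplanes K"
  shows "\<exists>s. s \<notin> K \<and> inj_on (int_dot s) A \<and> (\<forall>y\<in>P. real_vec s \<bullet> y < real_vec s \<bullet> v)"
proof -
  obtain H :: "((real^'n) \<times> real) set" where H: "finite H" "\<forall>(a, b)\<in>H. a \<noteq> 0"
      "real_vec ` K \<subseteq> (\<Union>(a, b)\<in>H. {x. a \<bullet> x = b})"
    using assms(4) unfolding in_finite_hyperplanes_def by blast
  have "finite (fst ` H \<union> diff_vectors A)"
    using H(1) assms(3) by (simp add: finite_diff_vectors)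
  moreover have "0 \<notin> fst ` H \<union> diff_vectors A"
  proof
    assume "0 \<in> fst ` H \<union> diff_vectors A"
    then have "0 \<in> fst ` H" using zero_notin_diff_vectors by blast
    then obtain p where "p \<in> H" "fst p = 0" by (rule imageE) simp
    then show False using H(2) by (cases p) auto
  qed
  ultimately obtain z where sep: "\<forall>y\<in>P. real_vec z \<bullet> y < real_vec z \<bullet> v"
      and off: "\<forall>c\<in>fst ` H \<union> diff_vectors A. c \<bullet> real_vec z \<noteq> 0"
    using exists_int_direction_separating_off_hyperplanes[OF assms(1,2)] by metis
  \<comment> \<open>z is off the linear hyperplanes; a suitable multiple of it also avoids the affine ones\<close>
  have "\<forall>p\<in>H. fst p \<bullet> real_vec z \<noteq> 0" using off by blast
  then have "\<forall>(a, b)\<in>H. a \<bullet> real_vec z \<noteq> 0" by (simp add: case_prod_beta)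
  then obtain m :: nat where m: "m > 0" "\<forall>(a, b)\<in>H. a \<bullet> (real m *\<^sub>R real_vec z) \<noteq> b"
    using exists_multiple_off_affine_hyperplanes[OF H(1)] by blast
  define s where "s = of_nat m *s z"
  have rs: "real_vec s = real m *\<^sub>R real_vec z" unfolding s_def by (rule real_vec_of_nat_scale)
  have "s \<notin> K"
  proof
    assume "s \<in> K"
    then obtain a b where ab: "(a, b) \<in> H" "a \<bullet> real_vec s = b" using H(3) by blast
    then show False using bspec[OF m(2) ab(1)] rs by simp
  qed
  moreover have "inj_on (int_dot s) A" using off m(1) by (simp add: inj_on_int_dot_iff rs)
  moreover have "\<forall>y\<in>P. real_vec s \<bullet> y < real_vec s \<bullet> v" using sep m(1) by (simp add: rs)
  ultimately show ?thesis by blast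
qed

lemma newton1_toric_subst_mono_generic:
  assumes "laurent_poly g"
  shows "\<exists>K. in_finite_hyperplanes K \<and>
           (newton f \<subseteq> newton g \<longrightarrow>
              (\<forall>s. s \<notin> K \<longrightarrow> newton1 (toric_subst f s) \<subseteq> newton1 (toric_subst g s)))"
  using in_finite_hyperplanes_non_injective[of "{u. g u \<noteq> 0}"] assms newton1_toric_subst_mono
  unfolding laurent_poly_def by blast

lemma exists_toric_subst_newton1_not_subset:
  assumes "laurent_poly f" and "laurent_poly g" and "in_finite_hyperplanes K"
    and "real_vec u \<notin> newton g" and "f u \<noteq> 0"
  shows "\<exists>s. s \<notin> K \<and> inj_on (int_dot s) {u. f u \<noteq> 0} \<and>
           real_of_int (int_dot s u) \<in> newton1 (toric_subst f s) - newton1 (toric_subst g s)"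
proof -
  obtain s where s: "s \<notin> K" "inj_on (int_dot s) {u. f u \<noteq> 0}"
      and sep: "\<forall>y\<in>real_vec ` {w. g w \<noteq> 0}. real_vec s \<bullet> y < real_vec s \<bullet> real_vec u"
    using exists_generic_separating_exponent[of "real_vec ` {w. g w \<noteq> 0}" "real_vec u"] assms
    unfolding laurent_poly_def newton_def by blast
  have "int_dot s w < int_dot s u" if "g w \<noteq> 0" for w
    using sep that by (simp flip: real_of_int_int_dot)
  then show ?thesis using s int_dot_in_newton1_diff[OF s(2) assms(5)] by blast
qed

lemma newton_subset_if_toric_subst_subset:
  assumes "laurent_poly f" and "laurent_poly g" and "in_finite_hyperplanes K"
    and "\<forall>s. s \<notin> K \<longrightarrow> newton1 (toric_subst f s) \<subseteq> newton1 (toric_subst g s)"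
  shows "newton f \<subseteq> newton g"
proof (rule ccontr)
  assume "\<not> newton f \<subseteq> newton g"
  then obtain u where "f u \<noteq> 0" "real_vec u \<notin> newton g" by (auto simp: newton_subset_iff)
  then show False
    using exists_toric_subst_newton1_not_subset[OF assms(1-3)] assms(4) by blast
qed

lemma exists_toric_subst_newton1_psubset:
  assumes "laurent_poly f" and "laurent_poly g" and "in_finite_hyperplanes K"
    and "newton f \<subset> newton g"
  shows "\<exists>s. s \<notin> K \<and> newton1 (toric_subst f s) \<subset> newton1 (toric_subst g s)"
proof -
  have "\<not> newton g \<subseteq> newton f" using assms(4) by blast
  then obtain w where "g w \<noteq> 0" "real_vec w \<notin> newton f" by (auto simp: newton_subset_iff)
  then obtain s where "s \<notin> K" "inj_on (int_dot s) {u. g u \<noteq> 0}"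
      "real_of_int (int_dot s w) \<in> newton1 (toric_subst g s) - newton1 (toric_subst f s)"
    using exists_toric_subst_newton1_not_subset[OF assms(2,1,3)] by blast
  then show ?thesis using newton1_toric_subst_mono assms(4) by blast
qed

theorem proposition3p3:
  fixes f g :: "int^'n \<Rightarrow> int"
  assumes "laurent_poly f" and "laurent_poly g"
  shows "(\<exists>K. in_finite_hyperplanes K \<and>
            (newton f \<subseteq> newton g \<longrightarrow>
               (\<forall>s. s \<notin> K \<longrightarrow> newton1 (toric_subst f s) \<subseteq> newton1 (toric_subst g s))))
       \<and> (\<forall>K. in_finite_hyperplanes K \<longrightarrow>
            (\<forall>s. s \<notin> K \<longrightarrow> newton1 (toric_subst f s) \<subseteq> newton1 (toric_subst g s)) \<longrightarrow>
            newton f \<subseteq> newton g)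
       \<and> (\<forall>K. in_finite_hyperplanes K \<longrightarrow> newton f \<subset> newton g \<longrightarrow>
            (\<exists>s. s \<notin> K \<and> newton1 (toric_subst f s) \<subset> newton1 (toric_subst g s)))"
  using newton1_toric_subst_mono_generic[OF assms(2)]
    newton_subset_if_toric_subst_subset[OF assms]
    exists_toric_subst_newton1_psubset[OF assms]
  by blast

end
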